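(* Let $\mathcal{A}$ be a finite set of alternatives, $N\ge2$, $i\in\{1,\dots,N\}$, and $w:\underline{\mathcal{P}}^N\to\underline{\mathcal{P}}$. Then (the restriction to $\mathcal{P}^N$ of) $w$ has a dictator at individual $i$ if and only if for every $p\in\mathcal{P}^N$: $+_i(p,w(p))=p$.
   Context: $\mathcal{P}$ is the set of weak orders on $\mathcal{A}$; $\underline{\mathcal{P}}=\mathcal{P}\cup\{\mathbf{c}\}$ with a new element $\mathbf{c}$; $\mathcal{P}^N$ and $\underline{\mathcal{P}}^N$ are the sets of $N$-tuples (profiles) over $\mathcal{P}$ and $\underline{\mathcal{P}}$. Strictness order: for weak orders, $r\le s$ iff every strict preference of $s$ is a strict preference of $r$; $\mathbf{c}$ is added as bottom element; $\mathbf{i}$ (total indifference) is the top. $\vee$ is least upper bound. $r+s=r\vee s$ if $r,s\in\mathcal{P}$, and $r+s=\mathbf{i}$ if $r=\mathbf{c}$ or $s=\mathbf{c}$. The map $+_i:\underline{\mathcal{P}}^N\times\underline{\mathcal{P}}\to\underline{\mathcal{P}}^N$ is $+_i((p_1,\dots,p_i,\dots,p_N),r)=(p_1,\dots,p_i+r,\dots,p_N)$. $w$ has a dictator at $i$ if for all $p\in\mathcal{P}^N$: (1) $w(p)=\mathbf{c}$ implies $p_i=\mathbf{i}$; (2) $p_i\ne\mathbf{i}$ implies $w(p)\le p_i$. *)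

theory Defs
  imports Main
begin

text \<open>Weak orders (complete preorders) on a carrier A, as relations R with (x,y) in R
  meaning x is weakly preferred to y.\<close>
definition weak_order :: "'a set \<Rightarrow> ('a \<times> 'a) set \<Rightarrow> bool" where
  "weak_order A R \<longleftrightarrow> R \<subseteq> A \<times> A \<and> refl_on A R \<and> trans R \<and> total_on A R"

definition Pset :: "'a set \<Rightarrow> ('a \<times> 'a) set set" where
  "Pset A = {R. weak_order A R}"

text \<open>Extended set: None plays the role of the new element c.\<close>
definition Pbar :: "'a set \<Rightarrow> ('a \<times> 'a) set option set" where
  "Pbar A = Some ` Pset A \<union> {None}"

definition strict_part :: "('a \<times> 'a) set \<Rightarrow> ('a \<times> 'a) set" where
  "strict_part R = {(x, y). (x, y) \<in> R \<and> (y, x) \<notin> R}"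

definition indiff :: "'a set \<Rightarrow> ('a \<times> 'a) set" where
  "indiff A = A \<times> A"

definition wo_le :: "('a \<times> 'a) set \<Rightarrow> ('a \<times> 'a) set \<Rightarrow> bool" where
  "wo_le r s \<longleftrightarrow> strict_part s \<subseteq> strict_part r"

definition ext_le :: "('a \<times> 'a) set option \<Rightarrow> ('a \<times> 'a) set option \<Rightarrow> bool" where
  "ext_le u v \<longleftrightarrow> u = None \<or> (\<exists>r s. u = Some r \<and> v = Some s \<and> wo_le r s)"

definition wo_join :: "'a set \<Rightarrow> ('a \<times> 'a) set \<Rightarrow> ('a \<times> 'a) set \<Rightarrow> ('a \<times> 'a) set" where
  "wo_join A r s = (THE u. u \<in> Pset A \<and> wo_le r u \<and> wo_le s u \<and>
      (\<forall>v \<in> Pset A. wo_le r v \<and> wo_le s v \<longrightarrow> wo_le u v))"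

definition wo_plus :: "'a set \<Rightarrow> ('a \<times> 'a) set option \<Rightarrow> ('a \<times> 'a) set option \<Rightarrow> ('a \<times> 'a) set option" where
  "wo_plus A u v = (case (u, v) of (Some r, Some s) \<Rightarrow> Some (wo_join A r s)
                                 | _ \<Rightarrow> Some (indiff A))"

text \<open>Profiles are lists of length N; individuals are indexed 0..N-1.\<close>
definition plus_at :: "'a set \<Rightarrow> nat \<Rightarrow> ('a \<times> 'a) set option list \<Rightarrow> ('a \<times> 'a) set option
    \<Rightarrow> ('a \<times> 'a) set option list" where
  "plus_at A i p r = p[i := wo_plus A (p ! i) r]"

definition profiles :: "'a set \<Rightarrow> nat \<Rightarrow> ('a \<times> 'a) set option list set" where
  "profiles A N = {p. length p = N \<and> set p \<subseteq> Some ` Pset A}"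

definition profiles_bar :: "'a set \<Rightarrow> nat \<Rightarrow> ('a \<times> 'a) set option list set" where
  "profiles_bar A N = {p. length p = N \<and> set p \<subseteq> Pbar A}"

definition has_dictator ::
  "'a set \<Rightarrow> nat \<Rightarrow> (('a \<times> 'a) set option list \<Rightarrow> ('a \<times> 'a) set option) \<Rightarrow> nat \<Rightarrow> bool" where
  "has_dictator A N w i \<longleftrightarrow> (\<forall>p \<in> profiles A N.
      (w p = None \<longrightarrow> p ! i = Some (indiff A)) \<and>
      (p ! i \<noteq> Some (indiff A) \<longrightarrow> ext_le (w p) (p ! i)))"

end

theory Submission
  imports Defs
begin

text \<open>On weak orders the strictness order is plain inclusion: r \<le> s holds iff every weak
  preference of r is one of s. Hence the join r \<or> s is the transitive closure of r \<union> s, and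
  for weak orders s, r we get s + r = s exactly when r \<le> s. The case w(p) = c of the
  dictator condition matches the convention s + c = i.\<close>

lemma weak_order_field:
  assumes "weak_order A r" and "(x, y) \<in> r"
  shows "x \<in> A" and "y \<in> A"
  using assms unfolding weak_order_def by auto

lemma weak_order_total:
  assumes "weak_order A r" and "x \<in> A" and "y \<in> A"
  shows "(x, y) \<in> r \<or> (y, x) \<in> r"
  using assms unfolding weak_order_def refl_on_def total_on_def by (cases "x = y") auto

lemma wo_le_iff_subset:
  assumes r: "weak_order A r" and v: "weak_order A v"
  shows "wo_le r v \<longleftrightarrow> r \<subseteq> v"
proof
  assume le: "wo_le r v"
  show "r \<subseteq> v"
  proof (rule subrelI)
    fix x y assume xy: "(x, y) \<in> r"
    show "(x, y) \<in> v"
    proof (rule ccontr)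
      assume nxy: "(x, y) \<notin> v"
      then have "(y, x) \<in> v"
        using weak_order_total[OF v] weak_order_field[OF r xy] by blast
      with nxy have "(y, x) \<in> strict_part r"
        using le unfolding wo_le_def strict_part_def by blast
      with xy show False unfolding strict_part_def by simp
    qed
  qed
next
  assume sub: "r \<subseteq> v"
  show "wo_le r v"
    unfolding wo_le_def
  proof (rule subrelI)
    fix x y assume "(x, y) \<in> strict_part v"
    then have xy: "(x, y) \<in> v" "(y, x) \<notin> v" unfolding strict_part_def by auto
    with sub have "(y, x) \<notin> r" by blast
    moreover have "(x, y) \<in> r"
      using calculation weak_order_total[OF r] weak_order_field[OF v xy(1)] by blast
    ultimately show "(x, y) \<in> strict_part r" unfolding strict_part_def by simp
  qed
qed

lemma weak_order_superset:
  assumes "weak_order A r" and "r \<subseteq> R" and "R \<subseteq> A \<times> A" and "trans R"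
  shows "weak_order A R"
proof -
  have "refl_on A R" "total_on A R"
    using assms(1,2) unfolding weak_order_def refl_on_def total_on_def by blast+
  then show ?thesis using assms(3,4) unfolding weak_order_def by blast
qed

lemma weak_order_trancl_Un:
  assumes r: "weak_order A r" and s: "weak_order A s"
  shows "weak_order A ((r \<union> s)\<^sup>+)"
proof (rule weak_order_superset[OF r])
  have "r \<union> s \<subseteq> A \<times> A" using r s unfolding weak_order_def by blast
  then show "(r \<union> s)\<^sup>+ \<subseteq> A \<times> A" by (rule trancl_subset_Sigma)
qed auto

lemma wo_join_eq_trancl:
  assumes r: "r \<in> Pset A" and s: "s \<in> Pset A"
  shows "wo_join A r s = (r \<union> s)\<^sup>+"
proof -
  have le_iff: "wo_le u v \<longleftrightarrow> u \<subseteq> v" if "u \<in> Pset A" "v \<in> Pset A" for u v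
    using that wo_le_iff_subset by (simp add: Pset_def)
  have trancl_Pset: "(r \<union> s)\<^sup>+ \<in> Pset A"
    using assms weak_order_trancl_Un by (simp add: Pset_def)
  have least: "(r \<union> s)\<^sup>+ \<subseteq> v" if "v \<in> Pset A" "r \<subseteq> v" "s \<subseteq> v" for v
  proof -
    have "trans v" using that(1) by (simp add: Pset_def weak_order_def)
    then show ?thesis using that(2,3) trancl_mono_subset[of "r \<union> s" v] by simp
  qed
  show ?thesis
    unfolding wo_join_def
  proof (rule the_equality)
    show "(r \<union> s)\<^sup>+ \<in> Pset A \<and> wo_le r ((r \<union> s)\<^sup>+) \<and> wo_le s ((r \<union> s)\<^sup>+) \<and>
        (\<forall>v \<in> Pset A. wo_le r v \<and> wo_le s v \<longrightarrow> wo_le ((r \<union> s)\<^sup>+) v)"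
      using trancl_Pset r s least by (auto simp: le_iff)
  next
    fix u assume u: "u \<in> Pset A \<and> wo_le r u \<and> wo_le s u \<and>
        (\<forall>v \<in> Pset A. wo_le r v \<and> wo_le s v \<longrightarrow> wo_le u v)"
    then have uP: "u \<in> Pset A" by simp
    with u have "r \<subseteq> u" "s \<subseteq> u" "\<forall>v \<in> Pset A. r \<subseteq> v \<and> s \<subseteq> v \<longrightarrow> u \<subseteq> v"
      using r s by (simp_all add: le_iff)
    moreover have "r \<subseteq> (r \<union> s)\<^sup>+" "s \<subseteq> (r \<union> s)\<^sup>+" by auto
    ultimately show "u = (r \<union> s)\<^sup>+"
      using uP trancl_Pset least by (meson subset_antisym)
  qed
qed

lemma wo_join_eq_left_iff:
  assumes "r \<in> Pset A" and "s \<in> Pset A"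
  shows "wo_join A s r = s \<longleftrightarrow> r \<subseteq> s"
proof -
  have "trans s" using assms(2) unfolding Pset_def weak_order_def by auto
  then show ?thesis
    using wo_join_eq_trancl[OF assms(2,1)] by (auto simp: Un_absorb2)
qed

lemma wo_plus_Some_eq_iff:
  assumes s: "s \<in> Pset A" and u: "u \<in> Pbar A"
  shows "wo_plus A (Some s) u = Some s \<longleftrightarrow>
    (u = None \<longrightarrow> s = indiff A) \<and> (s \<noteq> indiff A \<longrightarrow> ext_le u (Some s))"
proof (cases u)
  case None
  then show ?thesis by (auto simp: wo_plus_def ext_le_def)
next
  case (Some r)
  then have r: "r \<in> Pset A" using u unfolding Pbar_def by auto
  have "r \<subseteq> indiff A" using r unfolding Pset_def weak_order_def indiff_def by auto
  moreover have "wo_le r s \<longleftrightarrow> r \<subseteq> s"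
    using r s wo_le_iff_subset unfolding Pset_def by blast
  ultimately show ?thesis
    using Some wo_join_eq_left_iff[OF r s] by (auto simp: wo_plus_def ext_le_def)
qed

theorem proposition4:
  fixes A :: "'a set" and N i :: nat
    and w :: "('a \<times> 'a) set option list \<Rightarrow> ('a \<times> 'a) set option"
  assumes "finite A" and "N \<ge> 2" and "i < N"
    and "\<forall>p \<in> profiles_bar A N. w p \<in> Pbar A"
  shows "has_dictator A N w i \<longleftrightarrow> (\<forall>p \<in> profiles A N. plus_at A i p (w p) = p)"
  unfolding has_dictator_def
proof (rule ball_cong[OF refl])
  fix p assume p: "p \<in> profiles A N"
  then have "i < length p" using assms(3) unfolding profiles_def by simp
  then obtain s where s: "p ! i = Some s" "s \<in> Pset A"
    using p nth_mem[of i p] unfolding profiles_def by blast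
  have "p \<in> profiles_bar A N" using p unfolding profiles_def profiles_bar_def Pbar_def by auto
  then have wp: "w p \<in> Pbar A" using assms(4) by blast
  have "plus_at A i p (w p) = p \<longleftrightarrow> wo_plus A (Some s) (w p) = Some s"
    using \<open>i < length p\<close> s(1) by (auto simp: plus_at_def list_update_same_conv)
  with s show "(w p = None \<longrightarrow> p ! i = Some (indiff A)) \<and>
      (p ! i \<noteq> Some (indiff A) \<longrightarrow> ext_le (w p) (p ! i)) \<longleftrightarrow> plus_at A i p (w p) = p"
    using wo_plus_Some_eq_iff[OF s(2) wp] by simp
qed

end
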